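(* Let $M\in\mathrm{M}_n(\mathbb{K})$ with minimal polynomial $\mu_M=f_1^{m_1}\cdots f_s^{m_s}$, where $f_1,\dots,f_s\in\mathbb{K}[x]$ are pairwise distinct monic irreducible polynomials and $m_i\ge 1$, and let $\mathcal{C}\subseteq\mathbb{L}^n$ be an $M$-code of dimension $k$. Let $\Gamma=\{i\in\{1,\dots,s\} : \ker(f_i^{m_i}(M))\subseteq\mathcal{C}\}$ (kernel in $\mathbb{L}^n$) and $d_\Gamma=\sum_{i\in\Gamma}\dim_{\mathbb{K}}\ker(f_i^{m_i}(M))$. Then $M_r(\mathcal{C})=r$ for all $r\in\{1,\dots,d_\Gamma\}$.
   Context: Let $\mathbb{L}/\mathbb{K}$ be a field extension of finite degree $m$, and $n\ge 1$ an integer with $m\ge n$ (standing assumption). Vectors are row vectors; for a matrix $A$ with entries in $\mathbb{K}$, $\ker(A)$ denotes $\{c : cA^t=0\}$ in $\mathbb{K}^n$ or in $\mathbb{L}^n$. Fix a $\mathbb{K}$-basis $\mathcal{B}$ of $\mathbb{L}$; for $c=(c_1,\dots,c_n)\in\mathbb{L}^n$ let $M_{\mathcal{B}}(c)\in\mathrm{M}_{m\times n}(\mathbb{K})$ be the matrix whose $j$-th column is the coordinate vector of $c_j$ in $\mathcal{B}$. The rank support $\mathrm{Rsupp}(c)\subseteq\mathbb{K}^n$ is the $\mathbb{K}$-row space of $M_{\mathcal{B}}(c)$, and $\mathrm{wt}_R(c)=\dim_{\mathbb{K}}\mathrm{Rsupp}(c)$. For an $\mathbb{L}$-subspace $\mathcal{D}\subseteq\mathbb{L}^n$,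 $\mathrm{Rsupp}(\mathcal{D})$ is the $\mathbb{K}$-span of all $\mathrm{Rsupp}(d)$, $d\in\mathcal{D}$, and $\mathrm{wt}_R(\mathcal{D})=\dim_{\mathbb{K}}\mathrm{Rsupp}(\mathcal{D})$. A linear $[n,k]$ code is a $k$-dimensional $\mathbb{L}$-subspace $\mathcal{C}\subseteq\mathbb{L}^n$; for $1\le r\le k$, $M_r(\mathcal{C})=\min\{\mathrm{wt}_R(\mathcal{D}) : \mathcal{D}\subseteq\mathcal{C},\ \dim_{\mathbb{L}}\mathcal{D}=r\}$. For $M\in\mathrm{M}_n(\mathbb{K})$, a linear code $\mathcal{C}\subseteq\mathbb{L}^n$ is an $M$-code if $cM^t\in\mathcal{C}$ for all $c\in\mathcal{C}$. *)

theory Defs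
  imports "HOL-Analysis.Analysis" "HOL-Computational_Algebra.Polynomial" "HOL-Computational_Algebra.Factorial_Ring"
begin

text \<open>The field extension L/K is given by a field embedding emb : K -> L
  (K and L are field types 'k and 'l).\<close>
definition field_emb :: "('k::field \<Rightarrow> 'l::field) \<Rightarrow> bool" where
  "field_emb emb \<longleftrightarrow> emb 1 = 1 \<and> (\<forall>a b. emb (a + b) = emb a + emb b) \<and> (\<forall>a b. emb (a * b) = emb a * emb b)"

text \<open>A K-basis of L indexed by the finite type 'm (so m = CARD('m)):
  every element of L has a unique coordinate vector.\<close>
definition is_K_basis :: "('k::field \<Rightarrow> 'l::field) \<Rightarrow> ('m::finite \<Rightarrow> 'l) \<Rightarrow> bool" where
  "is_K_basis emb B \<longleftrightarrow> (\<forall>x. \<exists>!a::'k^'m. x = (\<Sum>i\<in>UNIV. emb (a $ i) * B i))"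

definition coords :: "('k::field \<Rightarrow> 'l::field) \<Rightarrow> ('m::finite \<Rightarrow> 'l) \<Rightarrow> 'l \<Rightarrow> 'k^'m" where
  "coords emb B x = (THE a. x = (\<Sum>i\<in>UNIV. emb (a $ i) * B i))"

definition MB :: "('k::field \<Rightarrow> 'l::field) \<Rightarrow> ('m::finite \<Rightarrow> 'l) \<Rightarrow> 'l^'n \<Rightarrow> 'k^'n^'m" where
  "MB emb B c = (\<chi> i j. coords emb B (c $ j) $ i)"

definition Rsupp :: "('k::field \<Rightarrow> 'l::field) \<Rightarrow> ('m::finite \<Rightarrow> 'l) \<Rightarrow> 'l^'n \<Rightarrow> ('k^'n) set" where
  "Rsupp emb B c = vec.span {MB emb B c $ i | i. True}"

definition wtR :: "('k::field \<Rightarrow> 'l::field) \<Rightarrow> ('m::finite \<Rightarrow> 'l) \<Rightarrow> 'l^'n \<Rightarrow> nat" where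
  "wtR emb B c = vec.dim (Rsupp emb B c)"

definition Rsupp_sp :: "('k::field \<Rightarrow> 'l::field) \<Rightarrow> ('m::finite \<Rightarrow> 'l) \<Rightarrow> ('l^'n) set \<Rightarrow> ('k^'n) set" where
  "Rsupp_sp emb B D = vec.span (\<Union>d\<in>D. Rsupp emb B d)"

definition wtR_sp :: "('k::field \<Rightarrow> 'l::field) \<Rightarrow> ('m::finite \<Rightarrow> 'l) \<Rightarrow> ('l^'n) set \<Rightarrow> nat" where
  "wtR_sp emb B D = vec.dim (Rsupp_sp emb B D)"

definition Mr :: "('k::field \<Rightarrow> 'l::field) \<Rightarrow> ('m::finite \<Rightarrow> 'l) \<Rightarrow> nat \<Rightarrow> ('l^'n) set \<Rightarrow> nat" where
  "Mr emb B r C = Min {wtR_sp emb B D | D. vec.subspace D \<and> D \<subseteq> C \<and> vec.dim D = r}"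

definition emb_mat :: "('k::field \<Rightarrow> 'l::field) \<Rightarrow> 'k^'n^'n \<Rightarrow> 'l^'n^'n" where
  "emb_mat emb A = (\<chi> i j. emb (A $ i $ j))"

definition kerK :: "'k::field^'n^'n \<Rightarrow> ('k^'n) set" where
  "kerK A = {c. c v* transpose A = 0}"

definition kerL :: "('k::field \<Rightarrow> 'l::field) \<Rightarrow> 'k^'n^'n \<Rightarrow> ('l^'n) set" where
  "kerL emb A = {c. c v* transpose (emb_mat emb A) = 0}"

definition is_M_code :: "('k::field \<Rightarrow> 'l::field) \<Rightarrow> 'k^'n^'n \<Rightarrow> ('l^'n) set \<Rightarrow> bool" where
  "is_M_code emb M C \<longleftrightarrow> vec.subspace C \<and> (\<forall>c\<in>C. c v* transpose (emb_mat emb M) \<in> C)"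

definition mat_pow :: "'a::semiring_1^'n^'n \<Rightarrow> nat \<Rightarrow> 'a^'n^'n" where
  "mat_pow A i = ((\<lambda>X. X ** A) ^^ i) (mat 1)"

definition poly_mat :: "'a::comm_ring_1 poly \<Rightarrow> 'a^'n^'n \<Rightarrow> 'a^'n^'n" where
  "poly_mat p A = (\<Sum>i\<le>degree p. mat (coeff p i) ** mat_pow A i)"

definition min_poly :: "'a::field^'n^'n \<Rightarrow> 'a poly" where
  "min_poly A = (THE p. lead_coeff p = 1 \<and> poly_mat p A = 0 \<and>
      (\<forall>q. q \<noteq> 0 \<and> poly_mat q A = 0 \<longrightarrow> degree p \<le> degree q))"

end

theory Submission
  imports Defs
begin

(* Lower bound: an L-subspace D of L^n lies in the L-span of any K-basis of its rank support
   (expand each vector along the basis B of L), so dim_L D <= wt_R(D).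
   Upper bound: the kernels ker f_i^{m_i}(M), i in Gamma, are defined over K, lie in C, and
   form a direct sum since the f_i^{m_i} are pairwise coprime; so for r <= d_Gamma the code C
   contains the L-span D of r K-linearly independent vectors of K^n, and the rank support of
   such a D is contained in their K-span, whence wt_R(D) <= r = dim_L D. *)

lemma mat_pow_0 [simp]: "mat_pow A 0 = mat 1"
  by (simp add: mat_pow_def)

lemma mat_pow_Suc: "mat_pow A (Suc i) = mat_pow A i ** A"
  by (simp add: mat_pow_def)

lemma mat_pow_Suc_left: "mat_pow A (Suc i) = A ** (mat_pow A i :: 'a::semiring_1^'n^'n)"
  by (induction i) (simp_all add: mat_pow_Suc matrix_mul_assoc[symmetric])

lemma sum_matrix_vector_mult: "sum F S *v (x::'a::field^'n) = (\<Sum>i\<in>S. F i *v x)"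
  by (induct S rule: infinite_finite_induct) (simp_all add: matrix_vector_mult_add_rdistrib)

lemma mat_matrix_vector_mult: "(mat c ** X) *v x = c *s (X *v x :: 'a::field^'m)"
proof -
  have "mat c *v y = c *s y" for y :: "'a^'m"
    by (simp add: vec_eq_iff mat_def matrix_vector_mult_def if_distrib if_distribR cong: if_cong)
  then show ?thesis
    by (simp only: matrix_vector_mul_assoc[symmetric])
qed

lemma poly_mat_vector_mult:
  fixes A :: "'a::field^'n^'n"
  assumes "degree p \<le> N"
  shows "poly_mat p A *v x = (\<Sum>i\<le>N. coeff p i *s (mat_pow A i *v x))"
proof -
  have "poly_mat p A *v x = (\<Sum>i\<le>degree p. coeff p i *s (mat_pow A i *v x))"
    by (simp add: poly_mat_def sum_matrix_vector_mult mat_matrix_vector_mult)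
  also have "\<dots> = (\<Sum>i\<le>N. coeff p i *s (mat_pow A i *v x))"
    by (rule sum.mono_neutral_left) (use assms in \<open>auto simp: coeff_eq_0\<close>)
  finally show ?thesis .
qed

lemma poly_mat_add_vector_mult:
  fixes A :: "'a::field^'n^'n"
  shows "poly_mat (p + q) A *v x = poly_mat p A *v x + poly_mat q A *v x"
proof -
  let ?N = "max (degree p) (degree q)"
  have "degree (p + q) \<le> ?N"
    by (rule degree_add_le) auto
  then show ?thesis
    by (simp add: poly_mat_vector_mult[of _ ?N] sum.distrib[symmetric] vec.scale_left_distrib)
qed

lemma poly_mat_smult_vector_mult:
  fixes A :: "'a::field^'n^'n"
  shows "poly_mat (smult a p) A *v x = a *s (poly_mat p A *v x)"
  by (simp add: poly_mat_vector_mult[of _ "degree p"] vec.scale_sum_right)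

lemma poly_mat_pCons_vector_mult:
  fixes A :: "'a::field^'n^'n"
  shows "poly_mat (pCons a p) A *v x = a *s x + A *v (poly_mat p A *v x)"
proof -
  have "poly_mat (pCons a p) A *v x
      = (\<Sum>i\<le>Suc (degree p). coeff (pCons a p) i *s (mat_pow A i *v x))"
    by (rule poly_mat_vector_mult) (simp add: degree_pCons_le)
  also have "\<dots> = a *s x + (\<Sum>i\<le>degree p. coeff p i *s (mat_pow A (Suc i) *v x))"
    by (simp add: sum.atMost_Suc_shift del: sum.atMost_Suc)
  also have "\<dots> = a *s x + A *v (poly_mat p A *v x)"
    by (simp add: poly_mat_vector_mult[of p "degree p"] vec.sum vec.scale mat_pow_Suc_left
        matrix_vector_mul_assoc[symmetric])
  finally show ?thesis .
qed

lemma poly_mat_1_vector_mult [simp]: "poly_mat 1 (A::'a::field^'n^'n) *v x = x"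
  by (simp add: poly_mat_vector_mult[of 1 0])

lemma poly_mat_mult_vector_mult:
  fixes A :: "'a::field^'n^'n"
  shows "poly_mat (p * q) A *v x = poly_mat p A *v (poly_mat q A *v x)"
proof (induction p)
  case 0
  then show ?case
    by (simp add: poly_mat_vector_mult[of 0 0])
next
  case (pCons a p)
  have "pCons a p * q = smult a q + pCons 0 (p * q)"
    by simp
  then show ?case
    by (simp only: poly_mat_add_vector_mult poly_mat_smult_vector_mult poly_mat_pCons_vector_mult
        pCons.IH) simp
qed

lemma kerK_eq: "kerK P = {x. P *v x = 0}"
  by (simp add: kerK_def)

lemma subspace_kerK: "vec.subspace (kerK P)"
  unfolding kerK_eq by (rule vec.subspace_kernel)

(* For an arbitrary field 'a the type 'a poly has no gcd instance, so Bezout's identity is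
   derived here directly from the euclidean algorithm. *)
lemma euclidean_coprime_imp_bezout:
  fixes a b :: "'a::euclidean_ring"
  assumes "coprime a b"
  shows "\<exists>u v. u * a + v * b = 1"
  using assms
proof (induction "euclidean_size b" arbitrary: a b rule: less_induct)
  case less
  show ?case
  proof (cases "b = 0")
    case True
    then obtain w where "1 = a * w"
      using less.prems by (auto elim: dvdE)
    then have "w * a + 0 * b = 1"
      by (simp add: mult.commute)
    then show ?thesis
      by blast
  next
    case False
    have "coprime b (a mod b)"
      using False less.prems by (simp add: coprime_commute)
    with less.hyps[OF mod_size_less[OF False]]
    obtain u v where uv: "u * b + v * (a mod b) = 1"
      by blast
    have "a mod b = a - (a div b) * b"
      by (simp add: minus_div_mult_eq_mod)
    with uv have "v * a + (u - v * (a div b)) * b = 1"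
      by (simp add: algebra_simps)
    then show ?thesis
      by blast
  qed
qed

lemma euclidean_coprime_iff_bezout:
  fixes a b :: "'a::euclidean_ring"
  shows "coprime a b \<longleftrightarrow> (\<exists>u v. u * a + v * b = 1)"
proof
  assume "\<exists>u v. u * a + v * b = 1"
  then obtain u v where "u * a + v * b = 1"
    by blast
  then show "coprime a b"
    by (metis coprimeI dvd_add dvd_mult)
qed (rule euclidean_coprime_imp_bezout)

lemma euclidean_coprime_mult_left:
  fixes a b c :: "'a::euclidean_ring"
  assumes "coprime a c" "coprime b c"
  shows "coprime (a * b) c"
proof -
  obtain u1 v1 where 1: "u1 * a + v1 * c = 1"
    using assms(1) euclidean_coprime_iff_bezout by blast
  obtain u2 v2 where 2: "u2 * b + v2 * c = 1"
    using assms(2) euclidean_coprime_iff_bezout by blast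
  have "(u1 * u2) * (a * b) + (u1 * a * v2 + v1 * (u2 * b + v2 * c)) * c
      = (u1 * a + v1 * c) * (u2 * b + v2 * c)"
    by (simp add: algebra_simps)
  also have "\<dots> = 1"
    using 1 2 by simp
  finally show ?thesis
    unfolding euclidean_coprime_iff_bezout by blast
qed

lemma euclidean_coprime_power:
  fixes a b :: "'a::euclidean_ring"
  assumes "coprime a b"
  shows "coprime (a ^ m) (b ^ n)"
proof -
  have "coprime (a ^ m) b"
    using assms by (induction m) (simp_all add: euclidean_coprime_mult_left)
  then have "coprime b (a ^ m)"
    by (simp add: coprime_commute)
  then have "coprime (b ^ n) (a ^ m)"
    by (induction n) (simp_all add: euclidean_coprime_mult_left)
  then show ?thesis
    by (simp add: coprime_commute)
qed

lemma euclidean_coprime_prod_left: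
  fixes c :: "'a::euclidean_ring"
  shows "(\<And>i. i \<in> I \<Longrightarrow> coprime (g i) c) \<Longrightarrow> coprime (prod g I) c"
  by (induction I rule: infinite_finite_induct) (simp_all add: euclidean_coprime_mult_left)

lemma coprime_monic_irreducible:
  fixes p q :: "'a::field poly"
  assumes "lead_coeff p = 1" "lead_coeff q = 1" "irreducible p" "irreducible q" "p \<noteq> q"
  shows "coprime p q"
proof (rule coprimeI, rule ccontr)
  fix d
  assume "d dvd p" "d dvd q" "\<not> is_unit d"
  then have "p dvd q"
    using irreducibleD'[OF assms(3)] by (blast intro: dvd_trans)
  then obtain h where q: "q = p * h"
    by (elim dvdE)
  then have "is_unit h"
    using irreducibleD[OF assms(4)] irreducible_not_unit[OF assms(3)] by blast
  then obtain c where "h = [:c:]"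
    by (auto elim: is_unit_polyE)
  moreover have "lead_coeff h = 1"
    using assms(1,2) q by (simp add: lead_coeff_mult)
  ultimately have "h = 1"
    by (simp add: one_pCons)
  then show False
    using q assms(5) by simp
qed

lemma kerK_poly_mat_mono:
  fixes A :: "'a::field^'n^'n"
  assumes "p dvd q"
  shows "kerK (poly_mat p A) \<subseteq> kerK (poly_mat q A)"
proof
  fix x
  assume x: "x \<in> kerK (poly_mat p A)"
  obtain h where "q = h * p"
    using assms by (metis dvd_def mult.commute)
  then show "x \<in> kerK (poly_mat q A)"
    using x by (simp add: kerK_eq poly_mat_mult_vector_mult)
qed

lemma kerK_poly_mat_Int_span_kerK:
  fixes A :: "'a::field^'n^'n" and g :: "'i \<Rightarrow> 'a poly"
  assumes "finite I" and coprime: "\<And>i. i \<in> I \<Longrightarrow> coprime (g i) (g j)"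
  shows "kerK (poly_mat (g j) A) \<inter> vec.span (\<Union>i\<in>I. kerK (poly_mat (g i) A)) = {0}"
proof -
  have span_sub: "vec.span (\<Union>i\<in>I. kerK (poly_mat (g i) A)) \<subseteq> kerK (poly_mat (prod g I) A)"
    using kerK_poly_mat_mono[OF dvd_prodI[OF assms(1)]]
    by (intro vec.span_minimal UN_least subspace_kerK)
  have "coprime (prod g I) (g j)"
    by (rule euclidean_coprime_prod_left) (rule coprime)
  then obtain u v where bezout: "u * prod g I + v * g j = 1"
    using euclidean_coprime_imp_bezout by blast
  show ?thesis
  proof (intro equalityI subsetI)
    fix y
    assume "y \<in> kerK (poly_mat (g j) A) \<inter> vec.span (\<Union>i\<in>I. kerK (poly_mat (g i) A))"
    then have "poly_mat (g j) A *v y = 0" "poly_mat (prod g I) A *v y = 0"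
      using span_sub unfolding kerK_eq by blast+
    then have "poly_mat (u * prod g I + v * g j) A *v y = 0"
      by (simp only: poly_mat_add_vector_mult poly_mat_mult_vector_mult
          matrix_vector_mult_0_right add_0)
    then show "y \<in> {0}"
      by (simp add: bezout)
  qed (simp add: kerK_eq vec.span_zero)
qed

lemma dim_UN_kerK_poly_mat:
  fixes A :: "'a::field^'n^'n" and g :: "'i \<Rightarrow> 'a poly"
  assumes "finite I" "\<And>i j. i \<in> I \<Longrightarrow> j \<in> I \<Longrightarrow> i \<noteq> j \<Longrightarrow> coprime (g i) (g j)"
  shows "vec.dim (\<Union>i\<in>I. kerK (poly_mat (g i) A)) = (\<Sum>i\<in>I. vec.dim (kerK (poly_mat (g i) A)))"
  using assms
proof (induction I rule: finite_induct)
  case empty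
  then show ?case
    by simp
next
  case (insert j I)
  define K where "K = kerK (poly_mat (g j) A)"
  define T where "T = vec.span (\<Union>i\<in>I. kerK (poly_mat (g i) A))"
  have "vec.span K = K"
    unfolding K_def by (simp add: vec.span_eq_iff subspace_kerK)
  moreover have "(\<Union>i\<in>insert j I. kerK (poly_mat (g i) A)) = K \<union> (\<Union>i\<in>I. kerK (poly_mat (g i) A))"
    by (simp add: K_def)
  ultimately have span_eq:
    "vec.span (\<Union>i\<in>insert j I. kerK (poly_mat (g i) A)) = {x + y |x y. x \<in> K \<and> y \<in> T}"
    by (simp only: vec.span_Un T_def)
  have "vec.dim (\<Union>i\<in>insert j I. kerK (poly_mat (g i) A))
      = vec.dim (vec.span (\<Union>i\<in>insert j I. kerK (poly_mat (g i) A)))"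
    by (rule vec.dim_span[symmetric])
  also have "\<dots> = vec.dim {x + y |x y. x \<in> K \<and> y \<in> T}"
    by (simp only: span_eq)
  also have "\<dots> = vec.dim K + vec.dim T"
  proof -
    have "K \<inter> T = {0}"
      unfolding K_def T_def using insert by (intro kerK_poly_mat_Int_span_kerK) auto
    moreover have "vec.subspace K" "vec.subspace T"
      unfolding K_def T_def by (rule subspace_kerK, rule vec.subspace_span)
    ultimately show ?thesis
      using vec.dim_sums_Int[of K T] by simp
  qed
  finally have "vec.dim (\<Union>i\<in>insert j I. kerK (poly_mat (g i) A)) = vec.dim K + vec.dim T" .
  moreover have "vec.dim T = (\<Sum>i\<in>I. vec.dim (kerK (poly_mat (g i) A)))"
    unfolding T_def vec.dim_span by (rule insert.IH) (use insert.prems in auto)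
  ultimately show ?case
    using insert.hyps by (simp add: K_def)
qed

definition emb_vec :: "('k::field \<Rightarrow> 'l::field) \<Rightarrow> 'k^'n \<Rightarrow> 'l^'n" where
  "emb_vec emb v = (\<chi> j. emb (v $ j))"

locale field_ext_basis =
  fixes emb :: "'k::field \<Rightarrow> 'l::field" and B :: "'m::finite \<Rightarrow> 'l"
  assumes field_emb: "field_emb emb" and K_basis: "is_K_basis emb B"
begin

lemma emb_1: "emb 1 = 1"
  and emb_add: "emb (a + b) = emb a + emb b"
  and emb_mult: "emb (a * b) = emb a * emb b"
  using field_emb by (auto simp: field_emb_def)

lemma emb_0 [simp]: "emb 0 = 0"
  using emb_add[of 0 0] by (metis add_cancel_right_right add_0)

lemma emb_sum: "emb (sum g S) = (\<Sum>i\<in>S. emb (g i))"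
  by (induct S rule: infinite_finite_induct) (simp_all add: emb_add)

lemma emb_eq_0_iff: "emb a = 0 \<longleftrightarrow> a = 0"
proof
  assume "emb a = 0"
  show "a = 0"
  proof (rule ccontr)
    assume "a \<noteq> 0"
    then have "emb 1 = emb a * emb (inverse a)"
      by (simp add: emb_mult[symmetric])
    then show False
      using \<open>emb a = 0\<close> emb_1 by simp
  qed
qed simp

lemma inj_emb: "inj emb"
proof (rule injI)
  fix a b
  assume "emb a = emb b"
  then have "emb (a - b) = 0"
    using emb_add[of "a - b" b] by simp
  then show "a = b"
    by (simp add: emb_eq_0_iff)
qed

lemma coords_repr: "x = (\<Sum>i\<in>UNIV. emb (coords emb B x $ i) * B i)"
proof -
  have "\<exists>!a. x = (\<Sum>i\<in>UNIV. emb (a $ i) * B i)"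
    using K_basis by (simp add: is_K_basis_def)
  then show ?thesis
    unfolding coords_def by (rule theI')
qed

lemma coords_unique: "x = (\<Sum>i\<in>UNIV. emb (a $ i) * B i) \<Longrightarrow> coords emb B x = a"
  using K_basis coords_repr[of x] by (auto simp: is_K_basis_def)

lemma coords_add: "coords emb B (x + y) = coords emb B x + coords emb B y"
  by (rule coords_unique)
    (subst coords_repr[of x], subst coords_repr[of y], simp add: emb_add sum.distrib algebra_simps)

lemma coords_emb_mult: "coords emb B (emb a * x) = a *s coords emb B x"
  by (rule coords_unique) (subst coords_repr[of x], simp add: emb_mult sum_distrib_left algebra_simps)

lemma coords_0 [simp]: "coords emb B 0 = 0"
  by (rule coords_unique) simp

lemma coords_eq_0_iff: "coords emb B x = 0 \<longleftrightarrow> x = 0"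
  using coords_repr[of x] by auto

lemma emb_vec_0 [simp]: "emb_vec emb 0 = 0"
  by (simp add: emb_vec_def vec_eq_iff)

lemma emb_vec_add: "emb_vec emb (x + y) = emb_vec emb x + emb_vec emb y"
  by (simp add: emb_vec_def vec_eq_iff emb_add)

lemma emb_vec_scale: "emb_vec emb (a *s x) = emb a *s emb_vec emb x"
  by (simp add: emb_vec_def vec_eq_iff emb_mult)

lemma inj_emb_vec: "inj (emb_vec emb)"
  using inj_emb by (simp add: inj_def emb_vec_def vec_eq_iff)

lemma emb_vec_span: "x \<in> vec.span S \<Longrightarrow> emb_vec emb x \<in> vec.span (emb_vec emb ` S)"
proof (induction rule: vec.span_induct_alt)
  case base
  then show ?case
    by (simp add: vec.span_zero)
next
  case (step c x y)
  then show ?case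
    by (simp add: emb_vec_add emb_vec_scale vec.span_add vec.span_scale vec.span_base)
qed

lemma emb_mat_matrix_vector_mult: "emb_mat emb P *v emb_vec emb v = emb_vec emb (P *v v)"
  by (simp add: emb_mat_def emb_vec_def matrix_vector_mult_def vec_eq_iff emb_sum emb_mult)

lemma emb_vec_kerK_subset_kerL: "emb_vec emb ` kerK P \<subseteq> kerL emb P"
  by (auto simp: kerK_eq kerL_def emb_mat_matrix_vector_mult)

lemma MB_repr: "d = (\<Sum>i\<in>UNIV. B i *s emb_vec emb (MB emb B d $ i))"
proof -
  have "d $ j = (\<Sum>i\<in>UNIV. B i *s emb_vec emb (MB emb B d $ i)) $ j" for j
    by (subst coords_repr[of "d $ j"]) (simp add: MB_def emb_vec_def sum_component mult.commute)
  then show ?thesis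
    by (simp add: vec_eq_iff)
qed

lemma MB_0 [simp]: "MB emb B 0 = 0"
  by (simp add: MB_def vec_eq_iff)

lemma MB_add: "MB emb B (x + y) = MB emb B x + MB emb B y"
  by (simp add: MB_def vec_eq_iff coords_add)

lemma MB_scale_emb_vec: "MB emb B (c *s emb_vec emb v) $ i = coords emb B c $ i *s v"
  by (simp add: MB_def emb_vec_def vec_eq_iff mult.commute[of c] coords_emb_mult)

lemma MB_sum: "MB emb B (sum f T) = (\<Sum>v\<in>T. MB emb B (f v))"
  by (induction T rule: infinite_finite_induct) (simp_all add: MB_add)

lemma MB_row_span_emb_vec:
  "d \<in> vec.span (emb_vec emb ` S) \<Longrightarrow> MB emb B d $ i \<in> vec.span S"
proof (induction rule: vec.span_induct_alt)
  case base
  then show ?case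
    by (simp add: vec.span_zero)
next
  case (step c x y)
  then show ?case
    by (auto simp: MB_add MB_scale_emb_vec vec.span_add vec.span_scale vec.span_base)
qed

lemma wtR_sp_span_emb_vec_le: "wtR_sp emb B (vec.span (emb_vec emb ` S)) \<le> vec.dim S"
proof -
  have "Rsupp emb B d \<subseteq> vec.span S" if "d \<in> vec.span (emb_vec emb ` S)" for d
    unfolding Rsupp_def using MB_row_span_emb_vec[OF that]
    by (intro vec.span_minimal[OF _ vec.subspace_span]) blast
  then have "Rsupp_sp emb B (vec.span (emb_vec emb ` S)) \<subseteq> vec.span S"
    unfolding Rsupp_sp_def by (intro vec.span_minimal[OF _ vec.subspace_span] UN_least)
  then have "wtR_sp emb B (vec.span (emb_vec emb ` S)) \<le> vec.dim (vec.span S)"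
    unfolding wtR_sp_def by (rule vec.dim_subset)
  then show ?thesis
    by simp
qed

lemma independent_emb_vec:
  assumes S: "vec.independent S"
  shows "vec.independent (emb_vec emb ` S)"
  unfolding vec.independent_explicit
proof (intro conjI allI impI)
  have "finite S"
    using S vec.independent_explicit by blast
  then show "finite (emb_vec emb ` S)"
    by simp
  have inj: "inj_on (emb_vec emb) S"
    using inj_emb_vec by (rule inj_on_subset) simp
  fix c
  assume "(\<Sum>w\<in>emb_vec emb ` S. c w *s w) = 0"
  then have "(\<Sum>v\<in>S. c (emb_vec emb v) *s emb_vec emb v) = 0"
    by (simp add: sum.reindex[OF inj])
  then have "MB emb B (\<Sum>v\<in>S. c (emb_vec emb v) *s emb_vec emb v) $ i = 0" for i
    by simp
  then have rows: "(\<Sum>v\<in>S. coords emb B (c (emb_vec emb v)) $ i *s v) = 0" for i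
    by (simp add: MB_sum MB_scale_emb_vec sum_component)
  have indep: "\<forall>v\<in>S. u v = 0" if "(\<Sum>v\<in>S. u v *s v) = 0" for u
    using S that unfolding vec.independent_explicit by blast
  have "coords emb B (c (emb_vec emb v)) $ i = 0" if "v \<in> S" for v i
    using indep[OF rows[of i]] that by blast
  then show "\<forall>w\<in>emb_vec emb ` S. c w = 0"
    by (auto simp: vec_eq_iff simp flip: coords_eq_0_iff)
qed

lemma dim_span_emb_vec:
  assumes "vec.independent S"
  shows "vec.dim (vec.span (emb_vec emb ` S)) = card S"
proof -
  have "inj_on (emb_vec emb) S"
    using inj_emb_vec by (rule inj_on_subset) simp
  then show ?thesis
    using vec.dim_span_eq_card_independent[OF independent_emb_vec[OF assms]] by (simp add: card_image)
qed

lemma MB_row_in_Rsupp_sp: "d \<in> D \<Longrightarrow> MB emb B d $ i \<in> Rsupp_sp emb B D"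
  unfolding Rsupp_sp_def Rsupp_def by (blast intro: vec.span_base)

lemma dim_le_wtR_sp: "vec.dim D \<le> wtR_sp emb B D"
proof -
  obtain \<beta> where \<beta>: "vec.independent \<beta>" "Rsupp_sp emb B D \<subseteq> vec.span \<beta>"
    "card \<beta> = wtR_sp emb B D"
    unfolding wtR_sp_def by (rule vec.basis_exists)
  have "D \<subseteq> vec.span (emb_vec emb ` \<beta>)"
  proof
    fix d
    assume "d \<in> D"
    then have "emb_vec emb (MB emb B d $ i) \<in> vec.span (emb_vec emb ` \<beta>)" for i
      using \<beta>(2) MB_row_in_Rsupp_sp by (blast intro: emb_vec_span)
    then have "(\<Sum>i\<in>UNIV. B i *s emb_vec emb (MB emb B d $ i)) \<in> vec.span (emb_vec emb ` \<beta>)"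
      by (intro vec.span_sum vec.span_scale)
    then show "d \<in> vec.span (emb_vec emb ` \<beta>)"
      by (simp flip: MB_repr)
  qed
  then have "vec.dim D \<le> vec.dim (vec.span (emb_vec emb ` \<beta>))"
    by (rule vec.dim_subset)
  then show ?thesis
    using dim_span_emb_vec[OF \<beta>(1)] \<beta>(3) by simp
qed

lemma Mr_eq_self_if_emb_vec_subset:
  fixes C :: "('l^'n) set" and U :: "('k^'n) set"
  assumes C: "vec.subspace C" and U: "emb_vec emb ` U \<subseteq> C" and r: "r \<le> vec.dim U"
  shows "Mr emb B r C = r"
proof -
  obtain \<beta> where \<beta>: "\<beta> \<subseteq> U" "vec.independent \<beta>" "card \<beta> = vec.dim U"
    by (metis vec.basis_exists)
  obtain S where S: "S \<subseteq> \<beta>" "card S = r"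
    using r \<beta>(3) obtain_subset_with_card_n by metis
  have indep: "vec.independent S"
    using \<beta>(2) S(1) by (rule vec.independent_mono)
  define D where "D = vec.span (emb_vec emb ` S)"
  define W where "W = {wtR_sp emb B D | D. vec.subspace D \<and> D \<subseteq> C \<and> vec.dim D = r}"
  have "vec.subspace D"
    unfolding D_def by (rule vec.subspace_span)
  have "D \<subseteq> C"
    unfolding D_def using U S(1) \<beta>(1) by (intro vec.span_minimal[OF _ C]) blast
  have "vec.dim D = r"
    unfolding D_def using dim_span_emb_vec[OF indep] S(2) by simp
  have "wtR_sp emb B D \<le> vec.dim S"
    unfolding D_def by (rule wtR_sp_span_emb_vec_le)
  then have "r = wtR_sp emb B D"
    using dim_le_wtR_sp[of D] \<open>vec.dim D = r\<close> vec.dim_eq_card_independent[OF indep] S(2) by simp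
  then have "r \<in> W"
    unfolding W_def using \<open>vec.subspace D\<close> \<open>D \<subseteq> C\<close> \<open>vec.dim D = r\<close> by blast
  moreover have "r \<le> w" if w: "w \<in> W" for w
  proof -
    obtain D' :: "('l^'n) set" where "w = wtR_sp emb B D'" "vec.dim D' = r"
      using w unfolding W_def by blast
    then show ?thesis
      using dim_le_wtR_sp[of D'] by simp
  qed
  moreover have "W \<subseteq> {..CARD('n)}"
    unfolding W_def wtR_sp_def using dim_subset_UNIV_cart_gen by blast
  ultimately show ?thesis
    unfolding Mr_def W_def[symmetric] by (intro Min_eqI) (auto intro: finite_subset)
qed

end

theorem corollary3:
  fixes emb :: "'k::field \<Rightarrow> 'l::field"
    and B :: "'m::finite \<Rightarrow> 'l"
    and M :: "'k^'n::finite^'n"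
    and C :: "('l^'n) set"
    and k s :: nat and f :: "nat \<Rightarrow> 'k poly" and mm :: "nat \<Rightarrow> nat"
  assumes "field_emb emb"
    and "is_K_basis emb B"
    and "CARD('n) \<le> CARD('m)"
    and "min_poly M = (\<Prod>i\<in>{1..s}. f i ^ mm i)"
    and "inj_on f {1..s}"
    and "\<forall>i\<in>{1..s}. lead_coeff (f i) = 1 \<and> irreducible (f i) \<and> mm i \<ge> 1"
    and "is_M_code emb M C"
    and "vec.dim C = k"
  shows "\<forall>r\<in>{1..(\<Sum>i\<in>{i\<in>{1..s}. kerL emb (poly_mat (f i ^ mm i) M) \<subseteq> C}.
                       vec.dim (kerK (poly_mat (f i ^ mm i) M)))}.
           Mr emb B r C = r"
proof -
  interpret field_ext_basis emb B
    using assms(1,2) by unfold_locales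
  define \<Gamma> where "\<Gamma> = {i\<in>{1..s}. kerL emb (poly_mat (f i ^ mm i) M) \<subseteq> C}"
  define U where "U = (\<Union>i\<in>\<Gamma>. kerK (poly_mat (f i ^ mm i) M))"
  have "coprime (f i ^ mm i) (f j ^ mm j)" if "i \<in> \<Gamma>" "j \<in> \<Gamma>" "i \<noteq> j" for i j
  proof (intro euclidean_coprime_power coprime_monic_irreducible)
    show "f i \<noteq> f j"
      using assms(5) that by (auto simp: \<Gamma>_def dest: inj_onD)
  qed (use assms(6) that in \<open>auto simp: \<Gamma>_def\<close>)
  then have dim_U: "vec.dim U = (\<Sum>i\<in>\<Gamma>. vec.dim (kerK (poly_mat (f i ^ mm i) M)))"
    unfolding U_def by (intro dim_UN_kerK_poly_mat) (auto simp: \<Gamma>_def)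
  have "emb_vec emb ` U \<subseteq> C"
    using emb_vec_kerK_subset_kerL unfolding U_def \<Gamma>_def by blast
  moreover have "vec.subspace C"
    using assms(7) by (simp add: is_M_code_def)
  ultimately show ?thesis
    by (intro ballI Mr_eq_self_if_emb_vec_subset) (auto simp: dim_U \<Gamma>_def)
qed

end
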